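(* Let $s\ge 2$, $n=2s-1$, and let $A_1A_2\dots A_n$ be a polygon whose distinct vertices lie on a circle $\Gamma$, with vertex indices taken modulo $n$. For each $i\in\{1,\dots,n\}$, let $d_i$ be a line through $A_i$ meeting the line of the opposite side $A_{i+s-1}A_{i+s}$ in a single point $M_i\notin\{A_{i+s-1},A_{i+s}\}$, and let $M'_i$ be the second intersection point of $d_i$ with $\Gamma$. Then $$\prod_{i=1}^{n}\frac{|M_iA_{i+s-1}|}{|M_iA_{i+s}|}=\prod_{i=1}^{n}\frac{|M'_iA_{i+s-1}|}{|M'_iA_{i+s}|}.$$
   Context: $|XY|$ denotes the Euclidean distance between points $X$ and $Y$. *)

theory Defs
  imports "HOL-Analysis.Analysis"
begin

definition line_through :: "real^2 \<Rightarrow> real^2 \<Rightarrow> (real^2) set" where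
  "line_through p q = affine hull {p, q}"

end

theory Submission
  imports Defs
begin

(* Fix i and write M = M_i, B = A_(i+s-1), C = A_(i+s). The inversion centred at M whose power
   is the power p of M with respect to the circle maps every line through M to itself and swaps
   the two points where that line meets the circle; so it swaps B with C and A_i with M'_i.
   The distance law of inversion, |X*Y*| = |p| |XY| / (|MX| |MY|), then gives
     |MB| / |MC| = (|M'_i B| / |M'_i C|) * (|A_i B| / |A_i C|).
   In the product over i the factors |A_i A_(i+s-1)| / |A_i A_(i+s)| cancel: as n = 2s - 1, the
   shift i -> i + s permutes the indices and turns the side A_i A_(i+s-1) of a numerator into
   the side A_(i+s) A_i of a denominator. *)

definition sphere_power :: "'a::metric_space \<Rightarrow> real \<Rightarrow> 'a \<Rightarrow> real" where
  "sphere_power c r M = (dist M c)\<^sup>2 - r\<^sup>2"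

(* For p < 0 (M inside the sphere) this is inversion followed by the reflection in the origin. *)
definition inversion :: "real \<Rightarrow> 'a::real_inner \<Rightarrow> 'a" where
  "inversion p x = (p / (x \<bullet> x)) *\<^sub>R x"

lemma sphere_secant_iff:
  fixes M c x :: "'a::real_inner"
  assumes "M + x \<in> sphere c r"
  shows "M + t *\<^sub>R x \<in> sphere c r \<longleftrightarrow> (t - 1) * (t * (x \<bullet> x) - sphere_power c r M) = 0"
proof -
  define u where "u = M - c"
  have r: "r = norm (u + x)"
    using assms by (simp add: u_def dist_norm norm_minus_commute algebra_simps)
  have "M + t *\<^sub>R x \<in> sphere c r \<longleftrightarrow> norm (u + t *\<^sub>R x) = norm (u + x)"
    by (simp add: r u_def dist_norm norm_minus_commute algebra_simps)
  also have "\<dots> \<longleftrightarrow> (norm (u + t *\<^sub>R x))\<^sup>2 - (norm (u + x))\<^sup>2 = 0"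
    by (simp add: power2_eq_iff_nonneg)
  also have "(norm (u + t *\<^sub>R x))\<^sup>2 - (norm (u + x))\<^sup>2 = (t - 1) * (t * (x \<bullet> x) - sphere_power c r M)"
  proof -
    have "sphere_power c r M = u \<bullet> u - (u + x) \<bullet> (u + x)"
      by (simp add: sphere_power_def r dist_norm u_def power2_norm_eq_inner)
    then show ?thesis
      by (simp only: power2_norm_eq_inner)
         (simp add: inner_add_left inner_add_right inner_commute power2_eq_square algebra_simps)
  qed
  finally show ?thesis .
qed

lemma norm_inversion: "norm (inversion p x) = \<bar>p\<bar> / norm x"
  by (cases "x = 0") (simp_all add: inversion_def power2_norm_eq_inner[symmetric] power2_eq_square)

lemma inner_scaleR_diff_self:
  fixes x y :: "'a::real_inner"
  shows "(a *\<^sub>R x - b *\<^sub>R y) \<bullet> (a *\<^sub>R x - b *\<^sub>R y)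
    = a\<^sup>2 * (x \<bullet> x) - 2 * a * b * (x \<bullet> y) + b\<^sup>2 * (y \<bullet> y)"
  by (simp add: inner_diff_left inner_diff_right inner_commute power2_eq_square algebra_simps)

lemma dist_inversion:
  fixes x y :: "'a::real_inner"
  assumes "x \<noteq> 0" "y \<noteq> 0"
  shows "dist (inversion p x) (inversion p y) = \<bar>p\<bar> * dist x y / (norm x * norm y)"
proof -
  define X Y where "X = x \<bullet> x" and "Y = y \<bullet> y"
  have "X > 0" "Y > 0" using assms by (simp_all add: X_def Y_def)
  have "(dist (inversion p x) (inversion p y))\<^sup>2
      = (p / X)\<^sup>2 * X - 2 * (p / X) * (p / Y) * (x \<bullet> y) + (p / Y)\<^sup>2 * Y"
    by (simp add: dist_norm power2_norm_eq_inner inversion_def inner_scaleR_diff_self flip: X_def Y_def)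
  also have "\<dots> = p\<^sup>2 * (X - 2 * (x \<bullet> y) + Y) / (X * Y)"
    using \<open>X > 0\<close> \<open>Y > 0\<close> by (simp add: field_simps power2_eq_square)
  also have "\<dots> = (\<bar>p\<bar> * dist x y / (norm x * norm y))\<^sup>2"
    using inner_scaleR_diff_self[of 1 x 1 y]
    by (simp add: dist_norm power_divide power_mult_distrib power2_norm_eq_inner X_def Y_def)
  finally show ?thesis by (simp add: power2_eq_iff_nonneg)
qed

lemma norm_mult_dist_inversion_swap:
  fixes x y :: "'a::real_inner"
  assumes "x \<noteq> 0" "y \<noteq> 0"
  shows "norm x * dist (inversion p x) y = norm y * dist x (inversion p y)"
proof -
  define X Y where "X = x \<bullet> x" and "Y = y \<bullet> y"
  have "X > 0" "Y > 0" using assms by (simp_all add: X_def Y_def)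
  have "(norm x * dist (inversion p x) y)\<^sup>2
      = X * ((p / X)\<^sup>2 * X - 2 * (p / X) * 1 * (x \<bullet> y) + 1\<^sup>2 * Y)"
    using inner_scaleR_diff_self[of "p / X" x 1 y]
    by (simp add: dist_norm power_mult_distrib power2_norm_eq_inner inversion_def flip: X_def Y_def)
  also have "\<dots> = Y * (1\<^sup>2 * X - 2 * 1 * (p / Y) * (x \<bullet> y) + (p / Y)\<^sup>2 * Y)"
    using \<open>X > 0\<close> \<open>Y > 0\<close> by (simp add: field_simps power2_eq_square)
  also have "\<dots> = (norm y * dist x (inversion p y))\<^sup>2"
    using inner_scaleR_diff_self[of 1 x "p / Y" y]
    by (simp add: dist_norm power_mult_distrib power2_norm_eq_inner inversion_def flip: X_def Y_def)
  finally show ?thesis by (simp add: power2_eq_iff_nonneg)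
qed

lemma inversion_ratio:
  fixes x y :: "'a::real_inner"
  assumes "x \<noteq> 0" "y \<noteq> 0" "p \<noteq> 0" "y \<noteq> x" "y \<noteq> inversion p x"
  shows "norm x / norm (inversion p x)
    = dist (inversion p y) x / dist (inversion p y) (inversion p x) * (dist y x / dist y (inversion p x))"
proof -
  have swap: "dist (inversion p y) x = norm x * dist y (inversion p x) / norm y"
    using norm_mult_dist_inversion_swap[OF assms(2,1), of p] assms(2) by (simp add: field_simps)
  have "dist y x \<noteq> 0" "dist y (inversion p x) \<noteq> 0"
    using assms(4,5) by simp_all
  then show ?thesis
    using assms(1-3)
    by (simp add: swap norm_inversion dist_inversion[OF assms(2,1)] field_simps)
qed

lemma affine_hull_2_reparametrize:
  fixes A P M :: "'a::real_vector"
  assumes "M \<in> affine hull {A, P}" "M \<noteq> A"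
  shows "affine hull {A, P} = range (\<lambda>t. M + t *\<^sub>R (A - M))"
proof -
  have "collinear {A, M, P}"
    using affine_hull_3_imp_collinear[OF assms(1)] by (simp add: insert_commute)
  then have "P \<in> affine hull {A, M}"
    using assms(2) collinear_3_imp_in_affine_hull by blast
  then have "affine hull {A, P} = affine hull {M, A}"
    using hull_redundant[OF assms(1)] hull_redundant[of P affine "{A, M}"]
    by (simp add: insert_commute)
  then show ?thesis by (simp add: affine_hull_2_alt)
qed

lemma line_inter_sphere:
  fixes M y c :: "'a::real_inner"
  assumes "M + y \<in> sphere c r" "y \<noteq> 0"
  shows "range (\<lambda>t. M + t *\<^sub>R y) \<inter> sphere c r = {M + y, M + inversion (sphere_power c r M) y}"
proof -
  define p where "p = sphere_power c r M"
  have "M + t *\<^sub>R y \<in> sphere c r \<longleftrightarrow> t = 1 \<or> t = p / (y \<bullet> y)" for t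
  proof -
    have "M + t *\<^sub>R y \<in> sphere c r \<longleftrightarrow> (t - 1) * (t * (y \<bullet> y) - p) = 0"
      using sphere_secant_iff[OF assms(1)] by (simp add: p_def)
    also have "\<dots> \<longleftrightarrow> t = 1 \<or> t = p / (y \<bullet> y)"
      using assms(2) by (auto simp: eq_divide_eq)
    finally show ?thesis .
  qed
  then have "range (\<lambda>t. M + t *\<^sub>R y) \<inter> sphere c r = (\<lambda>t. M + t *\<^sub>R y) ` {1, p / (y \<bullet> y)}"
    by blast
  then show ?thesis
    by (simp add: inversion_def p_def)
qed

lemma secant_chord_ratio:
  fixes A B C M M' P c :: "'a::real_inner"
  assumes on_sphere: "A \<in> sphere c r" "B \<in> sphere c r" "C \<in> sphere c r"
    and distinct: "A \<noteq> B" "A \<noteq> C" "B \<noteq> C"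
    and M_meet: "affine hull {A, P} \<inter> affine hull {B, C} = {M}"
    and M_not: "M \<noteq> B" "M \<noteq> C"
    and M'_second: "affine hull {A, P} \<inter> sphere c r = {A, M'}"
  shows "dist M B / dist M C = dist M' B / dist M' C * (dist A B / dist A C)"
proof -
  define p where "p = sphere_power c r M"
  define x y where "x = B - M" and "y = A - M"
  have B_eq: "B = M + x" and A_eq: "A = M + y"
    by (simp_all add: x_def y_def)
  have M_chord: "M \<in> affine hull {B, C}" and M_secant: "M \<in> affine hull {A, P}"
    using M_meet by blast+
  have "x \<noteq> 0"
    using M_not(1) by (simp add: x_def)
  have chord: "affine hull {B, C} = range (\<lambda>t. M + t *\<^sub>R x)"
    using affine_hull_2_reparametrize[OF M_chord M_not(1)] by (simp add: x_def)
  have "C \<in> affine hull {B, C} \<inter> sphere c r"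
    using on_sphere(3) by (simp add: hull_inc)
  also have "\<dots> = {B, M + inversion p x}"
    unfolding chord using line_inter_sphere[of M x c r] on_sphere(2) \<open>x \<noteq> 0\<close>
    by (simp add: B_eq p_def)
  finally have C_eq: "C = M + inversion p x"
    using distinct(3) by blast
  then have "p \<noteq> 0"
    using M_not(2) by (auto simp: inversion_def)
  then have "M \<noteq> A"
    using on_sphere(1) by (auto simp: p_def sphere_power_def dist_commute)
  then have "y \<noteq> 0"
    by (simp add: y_def)
  have secant: "affine hull {A, P} = range (\<lambda>t. M + t *\<^sub>R y)"
    using affine_hull_2_reparametrize[OF M_secant \<open>M \<noteq> A\<close>] by (simp add: y_def)
  have "{A, M'} = {A, M + inversion p y}"
    unfolding M'_second[symmetric] secant using line_inter_sphere[of M y c r] on_sphere(1) \<open>y \<noteq> 0\<close>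
    by (simp add: A_eq p_def)
  then have M'_eq: "M' = M + inversion p y"
    by (auto simp: doubleton_eq_iff)
  have "y \<noteq> x" "y \<noteq> inversion p x"
    using distinct(1,2) A_eq B_eq C_eq by auto
  have "dist M B / dist M C = norm x / norm (inversion p x)"
    by (simp add: B_eq C_eq dist_norm)
  also have "\<dots> = dist (inversion p y) x / dist (inversion p y) (inversion p x)
      * (dist y x / dist y (inversion p x))"
    by (rule inversion_ratio) fact+
  also have "\<dots> = dist M' B / dist M' C * (dist A B / dist A C)"
    by (simp add: M'_eq A_eq B_eq C_eq)
  finally show ?thesis .
qed

lemma add_mod_neq_self:
  fixes i k n :: nat
  assumes "i < n" "0 < k" "k < n"
  shows "(i + k) mod n \<noteq> i"
  using assms by (auto simp: mod_if le_mod_geq)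

lemma opposite_side_indices:
  fixes s n i :: nat
  assumes "s \<ge> 2" "n = 2 * s - 1" "i < n"
  shows "(i + s - 1) mod n \<noteq> i" "(i + s) mod n \<noteq> i"
    and "(i + s - 1) mod n \<noteq> (i + s) mod n"
    and "((i + s) mod n + s - 1) mod n = i"
proof -
  show "(i + s - 1) mod n \<noteq> i" "(i + s) mod n \<noteq> i"
    using add_mod_neq_self[of i n "s - 1"] add_mod_neq_self[of i n s] assms
    by (simp_all add: add_diff_assoc)
  have "(i + s) mod n = Suc (i + s - 1) mod n"
    using assms(1) by simp
  also have "\<dots> = ((i + s - 1) mod n + 1) mod n"
    by (simp add: mod_Suc_eq)
  also have "\<dots> \<noteq> (i + s - 1) mod n"
    using assms by (intro add_mod_neq_self) auto
  finally show "(i + s - 1) mod n \<noteq> (i + s) mod n"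
    by (rule not_sym)
  have "((i + s) mod n + s - 1) mod n = ((i + s) mod n + (s - 1)) mod n"
    using assms(1) by simp
  also have "\<dots> = (i + s + (s - 1)) mod n"
    by (simp only: mod_add_left_eq)
  also have "i + s + (s - 1) = i + n"
    using assms(1,2) by simp
  finally show "((i + s) mod n + s - 1) mod n = i"
    using assms(3) by simp
qed

lemma bij_betw_opposite_vertex:
  fixes s n :: nat
  assumes "s \<ge> 2" "n = 2 * s - 1"
  shows "bij_betw (\<lambda>i. (i + s) mod n) {..<n} {..<n}"
proof -
  have "inj_on (\<lambda>i. (i + s) mod n) {..<n}"
    by (rule inj_on_inverseI[where g = "\<lambda>j. (j + s - 1) mod n"])
       (use opposite_side_indices(4)[OF assms] in auto)
  moreover have "(\<lambda>i. (i + s) mod n) ` {..<n} \<subseteq> {..<n}"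
    using assms by auto
  ultimately show ?thesis
    by (simp add: bij_betw_def endo_inj_surj)
qed

lemma prod_symmetric_ratio_eq_one:
  fixes g :: "'a \<Rightarrow> 'a \<Rightarrow> 'b::field"
  assumes "finite I" "bij_betw e I I" "\<And>i. i \<in> I \<Longrightarrow> b (e i) = i" "\<And>i j. g i j = g j i"
    and "\<And>i. i \<in> I \<Longrightarrow> g i (e i) \<noteq> 0"
  shows "(\<Prod>i\<in>I. g i (b i) / g i (e i)) = 1"
proof -
  have "(\<Prod>i\<in>I. g i (b i)) = (\<Prod>i\<in>I. g (e i) (b (e i)))"
    using prod.reindex_bij_betw[OF assms(2), of "\<lambda>i. g i (b i)"] by simp
  also have "\<dots> = (\<Prod>i\<in>I. g i (e i))"
    using assms(3,4) by (intro prod.cong) auto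
  finally show ?thesis
    using assms(1,5) by (simp add: prod_dividef prod_zero_iff)
qed

theorem mainTheorem5:
  fixes s n :: nat and c :: "real^2" and r :: real
    and A M M' :: "nat \<Rightarrow> real^2" and d :: "nat \<Rightarrow> (real^2) set"
  assumes s2: "s \<ge> 2"
    and n_def: "n = 2 * s - 1"
    and r_pos: "r > 0"
    and on_circle: "\<forall>i<n. A i \<in> sphere c r"
    and distinct: "inj_on A {..<n}"
    and d_line: "\<forall>i<n. \<exists>P. P \<noteq> A i \<and> d i = line_through (A i) P"
    and M_meet: "\<forall>i<n. d i \<inter> line_through (A ((i + s - 1) mod n)) (A ((i + s) mod n)) = {M i}"
    and M_not: "\<forall>i<n. M i \<noteq> A ((i + s - 1) mod n) \<and> M i \<noteq> A ((i + s) mod n)"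
    and M'_second: "\<forall>i<n. d i \<inter> sphere c r = {A i, M' i}"
  shows "(\<Prod>i<n. dist (M i) (A ((i + s - 1) mod n)) / dist (M i) (A ((i + s) mod n)))
       = (\<Prod>i<n. dist (M' i) (A ((i + s - 1) mod n)) / dist (M' i) (A ((i + s) mod n)))"
proof -
  define ratio where "ratio X i = dist (X i) (A ((i + s - 1) mod n)) / dist (X i) (A ((i + s) mod n))"
    for X :: "nat \<Rightarrow> real^2" and i
  have "n > 0"
    using s2 n_def by simp
  have A_ne: "A i \<noteq> A j" if "i < n" "j < n" "i \<noteq> j" for i j
    using distinct that by (auto dest: inj_onD)
  have vertex_ratio: "ratio M i = ratio M' i * ratio A i" if "i < n" for i
  proof -
    let ?b = "(i + s - 1) mod n" and ?e = "(i + s) mod n"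
    have idx: "?b < n" "?e < n" "i \<noteq> ?b" "i \<noteq> ?e" "?b \<noteq> ?e"
      using opposite_side_indices(1-3)[OF s2 n_def \<open>i < n\<close>] \<open>n > 0\<close> by auto
    obtain P where d: "d i = affine hull {A i, P}"
      using d_line \<open>i < n\<close> unfolding line_through_def by blast
    show ?thesis
      unfolding ratio_def
    proof (rule secant_chord_ratio[where c = c and r = r and P = P])
      show "A i \<in> sphere c r" "A ?b \<in> sphere c r" "A ?e \<in> sphere c r"
        using on_circle \<open>i < n\<close> idx by blast+
      show "A i \<noteq> A ?b" "A i \<noteq> A ?e" "A ?b \<noteq> A ?e"
        using A_ne \<open>i < n\<close> idx by blast+
      show "affine hull {A i, P} \<inter> affine hull {A ?b, A ?e} = {M i}"
        using M_meet[rule_format, OF \<open>i < n\<close>] unfolding d line_through_def .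
      show "M i \<noteq> A ?b" "M i \<noteq> A ?e"
        using M_not \<open>i < n\<close> by blast+
      show "affine hull {A i, P} \<inter> sphere c r = {A i, M' i}"
        using M'_second[rule_format, OF \<open>i < n\<close>] unfolding d .
    qed
  qed
  have polygon_ratio: "(\<Prod>i<n. ratio A i) = 1"
    unfolding ratio_def
  proof (rule prod_symmetric_ratio_eq_one[OF _ bij_betw_opposite_vertex[OF s2 n_def]])
    show "((i + s) mod n + s - 1) mod n = i" if "i \<in> {..<n}" for i
      using opposite_side_indices(4)[OF s2 n_def] that by simp
    show "dist (A i) (A ((i + s) mod n)) \<noteq> 0" if "i \<in> {..<n}" for i
      using A_ne[of "(i + s) mod n" i] opposite_side_indices(2)[OF s2 n_def, of i] that \<open>n > 0\<close>
      by auto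
  qed (simp_all add: dist_commute)
  have "(\<Prod>i<n. ratio M i) = (\<Prod>i<n. ratio M' i * ratio A i)"
    by (rule prod.cong) (simp_all add: vertex_ratio)
  also have "\<dots> = (\<Prod>i<n. ratio M' i)"
    by (simp add: prod.distrib polygon_ratio)
  finally show ?thesis
    unfolding ratio_def .
qed

end
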